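(* Let $\boldsymbol\mu>\mathbf 0$ and assume $\mathbf I-\mathbf G$ is irreducible for every $\mathbf G\in\mathcal G(\boldsymbol\mu)$. Let $\Omega_1,\dots,\Omega_M\subseteq\{1,\dots,N\}$ be nonempty and $\bar p_{\Omega_1},\dots,\bar p_{\Omega_M}>0$, and let $\mathcal P=\{\mathbf p\in\mathbb R^N:\mathbf p\geq\mathbf 0,\ \sum_{i\in\Omega_m}p_i\leq\bar p_{\Omega_m},\ m=1,\dots,M\}$. Then there exists $\mathbf p\in\mathcal P$ with $\mathbf A(\boldsymbol\mu)\mathbf p\geq\mathbf n(\boldsymbol\mu)$ if and only if $$\max_{\mathbf G\in\mathcal G(\boldsymbol\mu)}\ \max_{m\in\{1,\dots,M\}}\ \lambda\Big(\psi\big(\mathbf I-\mathbf G,\ \tfrac{1}{\bar p_{\Omega_m}}\mathbf n_{\mathbf G},\ \Omega_m\big)\Big)\leq 1.$$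
   Context: Multicast system: $N$ transmitters; transmitter $T_i$ has $K_i\geq1$ receivers $R_i^{k}$, $k\in\mathcal K_i=\{1,\dots,K_i\}$. Channel gains $g_{r_i^{k},t_j}\geq 0$ (from $T_j$ to $R_i^k$) with $g_{r_i^{k},t_i}>0$; noise variance $\sigma^2>0$. For $\boldsymbol\mu\in\mathbb R^N$, $\mathbf a_i^{k}(\boldsymbol\mu)\in\mathbb R^{1\times N}$ is the row vector with $i$-th entry $1$ and $j$-th entry $-\mu_i g_{r_i^{k},t_j}/g_{r_i^{k},t_i}$ for $j\neq i$; $n_i^{k}(\boldsymbol\mu)=\mu_i\sigma^2/g_{r_i^{k},t_i}$. $\mathbf A(\boldsymbol\mu)$ stacks all rows $\mathbf a_i^k(\boldsymbol\mu)$ and $\mathbf n(\boldsymbol\mu)$ the corresponding $n_i^k(\boldsymbol\mu)$. $\mathcal G(\boldsymbol\mu)$ is the set of $N\times N$ matrices whose $i$-th row is $\mathbf a_i^{k_i}(\boldsymbol\mu)$ for some $k_i\in\mathcal K_i$; for such $\mathbf G$, $\mathbf n_{\mathbf G}=(n_1^{k_1}(\boldsymbol\mu),\dots,n_N^{k_N}(\boldsymbol\mu))^T$. For a matrix $\mathbf X\in\mathbb R^{N\times N}$, a vector $\mathbf y\in\mathbb R^N$ and $\Omega\subseteq\{1,\dots,N\}$, $\psi(\mathbf X,\mathbf y,\Omega)$ is the matrix obtained from $\mathbf X$ by adding $\mathbf y$ to the $j$-th column for every $j\in\Omega$ (other columns unchanged). $\lambda(\cdot)$ is the Perron–Frobenius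 eigenvalue (spectral radius) of a nonnegative square matrix. *)

theory Defs
  imports "Jordan_Normal_Form.Spectral_Radius"
begin

(* Indexing conventions: transmitters i \<in> {0..<N}; receivers of T_i are k \<in> {1..K i};
   g i k j is the gain from transmitter T_j to receiver R_i^k. *)

definition arow :: "nat \<Rightarrow> (nat \<Rightarrow> nat \<Rightarrow> nat \<Rightarrow> real) \<Rightarrow> (nat \<Rightarrow> real) \<Rightarrow> nat \<Rightarrow> nat \<Rightarrow> real vec" where
  "arow N g \<mu> i k = vec N (\<lambda>j. if j = i then 1 else - \<mu> i * g i k j / g i k i)"

definition nval :: "real \<Rightarrow> (nat \<Rightarrow> nat \<Rightarrow> nat \<Rightarrow> real) \<Rightarrow> (nat \<Rightarrow> real) \<Rightarrow> nat \<Rightarrow> nat \<Rightarrow> real" where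
  "nval \<sigma>2 g \<mu> i k = \<mu> i * \<sigma>2 / g i k i"

definition selections :: "nat \<Rightarrow> (nat \<Rightarrow> nat) \<Rightarrow> (nat \<Rightarrow> nat) set" where
  "selections N K = {ks. \<forall>i<N. ks i \<in> {1..K i}}"

definition Gmat :: "nat \<Rightarrow> (nat \<Rightarrow> nat \<Rightarrow> nat \<Rightarrow> real) \<Rightarrow> (nat \<Rightarrow> real) \<Rightarrow> (nat \<Rightarrow> nat) \<Rightarrow> real mat" where
  "Gmat N g \<mu> ks = mat N N (\<lambda>(i,j). arow N g \<mu> i (ks i) $ j)"

definition nG :: "nat \<Rightarrow> real \<Rightarrow> (nat \<Rightarrow> nat \<Rightarrow> nat \<Rightarrow> real) \<Rightarrow> (nat \<Rightarrow> real) \<Rightarrow> (nat \<Rightarrow> nat) \<Rightarrow> real vec" where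
  "nG N \<sigma>2 g \<mu> ks = vec N (\<lambda>i. nval \<sigma>2 g \<mu> i (ks i))"

definition Gset :: "nat \<Rightarrow> (nat \<Rightarrow> nat) \<Rightarrow> (nat \<Rightarrow> nat \<Rightarrow> nat \<Rightarrow> real) \<Rightarrow> (nat \<Rightarrow> real) \<Rightarrow> real mat set" where
  "Gset N K g \<mu> = Gmat N g \<mu> ` selections N K"

definition psi :: "real mat \<Rightarrow> real vec \<Rightarrow> nat set \<Rightarrow> real mat" where
  "psi X y \<Omega> = mat (dim_row X) (dim_col X) (\<lambda>(i,j). X $$ (i,j) + (if j \<in> \<Omega> then y $ i else 0))"

definition irreducible_mat :: "real mat \<Rightarrow> bool" where
  "irreducible_mat A \<longleftrightarrow> (\<exists>n. A \<in> carrier_mat n n \<and>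
     (\<forall>i<n. \<forall>j<n. i \<noteq> j \<longrightarrow> (i,j) \<in> {(a,b). a < n \<and> b < n \<and> A $$ (a,b) \<noteq> 0}\<^sup>+))"

(* Perron-Frobenius eigenvalue = spectral radius *)
definition pf_eig :: "real mat \<Rightarrow> real" where
  "pf_eig A = spectral_radius (map_mat complex_of_real A)"

end

theory Submission
  imports Defs
begin

text \<open>
  Put \<open>F = I - G\<close>, which is nonnegative and irreducible, and
  \<open>B = \<psi>(F, n\<^sub>G / pbar\<^sub>m, \<Omega>\<^sub>m)\<close>. A feasible power vector \<open>p\<close> is positive and satisfies
  \<open>B p \<le> p\<close>, so \<open>\<lambda>(B) \<le> 1\<close> by the Collatz-Wielandt bound.
  Conversely, if every \<open>\<lambda>(B) \<le> 1\<close>, then no nonzero \<open>w \<ge> 0\<close> satisfies \<open>w \<le> F w\<close>: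
  irreducibility would make such a \<open>w\<close> positive, and then \<open>B w > w\<close> forces \<open>\<lambda>(B) > 1\<close>.
  Hence every \<open>G\<close> is a monotone matrix (\<open>G x \<ge> 0\<close> implies \<open>x \<ge> 0\<close>), and \<open>G p = n\<^sub>G\<close> has a
  positive solution. Among all receiver selections, the solution of largest total power meets the
  target of every receiver, because switching a transmitter to a violated receiver would increase
  it; and it respects every budget, because otherwise \<open>B p > p\<close>.
\<close>

section \<open>Nonnegative matrices and the Perron-Frobenius eigenvalue\<close>

definition nonneg_mat :: "real mat \<Rightarrow> bool" where
  "nonneg_mat A \<longleftrightarrow> (\<forall>i<dim_row A. \<forall>j<dim_col A. 0 \<le> A $$ (i,j))"

lemma mult_mat_vec_index_sum:
  assumes "A \<in> carrier_mat m n" "v \<in> carrier_vec n" "i < m"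
  shows "(A *\<^sub>v v) $ i = (\<Sum>j\<in>{0..<n}. A $$ (i,j) * v $ j)"
  using assms by (auto simp: scalar_prod_def)

lemma one_minus_mat_mult_vec_index:
  fixes A :: "'a :: ring_1 mat"
  assumes "A \<in> carrier_mat n n" "v \<in> carrier_vec n" "i < n"
  shows "((1\<^sub>m n - A) *\<^sub>v v) $ i = v $ i - (A *\<^sub>v v) $ i"
  using minus_mult_distrib_mat_vec[OF one_carrier_mat assms(1,2)] assms by simp

lemma nonneg_mat_mult_vec_mono:
  assumes A: "A \<in> carrier_mat n n" "nonneg_mat A"
    and xy: "x \<in> carrier_vec n" "y \<in> carrier_vec n" "\<forall>j<n. x $ j \<le> y $ j" and i: "i < n"
  shows "(A *\<^sub>v x) $ i \<le> (A *\<^sub>v y) $ i"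
  unfolding mult_mat_vec_index_sum[OF A(1) xy(1) i] mult_mat_vec_index_sum[OF A(1) xy(2) i]
  using A xy i by (intro sum_mono mult_left_mono) (auto simp: nonneg_mat_def)

lemma nonneg_mat_mult_vec_nonneg:
  assumes A: "A \<in> carrier_mat n n" "nonneg_mat A"
    and x: "x \<in> carrier_vec n" "\<forall>j<n. 0 \<le> x $ j" and i: "i < n"
  shows "0 \<le> (A *\<^sub>v x) $ i"
  using nonneg_mat_mult_vec_mono[OF A zero_carrier_vec x(1) _ i] x A i by simp

lemma nonneg_mat_mult:
  assumes "A \<in> carrier_mat n n" "B \<in> carrier_mat n n" "nonneg_mat A" "nonneg_mat B"
  shows "nonneg_mat (A * B)"
  using assms unfolding nonneg_mat_def
  by (auto simp: scalar_prod_def intro!: sum_nonneg)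

lemma nonneg_mat_power:
  assumes "A \<in> carrier_mat n n" "nonneg_mat A"
  shows "nonneg_mat (A ^\<^sub>m k)"
proof (induction k)
  case (Suc k)
  then show ?case using assms by (simp add: nonneg_mat_mult[of _ n])
qed (auto simp: nonneg_mat_def)

lemma exp_exceeds_poly:
  fixes r a C1 C2 :: real
  assumes r: "1 < r" and a: "0 < a" and C: "0 \<le> C1" "0 \<le> C2"
  shows "\<exists>k. C1 + C2 * real k ^ d < r ^ k * a"
proof -
  \<comment> \<open>Polynomial growth is dominated by powers of \<open>sqrt r\<close>, and \<open>sqrt r ^ k\<close> is unbounded.\<close>
  define s where "s = sqrt r"
  have s: "1 < s" "s * s = r" using r by (auto simp: s_def)
  obtain P where P: "\<And>k. (1/s) ^ k * real k ^ d \<le> P"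
    using poly_exp_bound[of "1/s" d] s by auto
  have kd: "real k ^ d \<le> P * s ^ k" for k
    using mult_right_mono[OF P[of k], of "s ^ k"] s by (simp add: power_one_over field_simps)
  obtain k where k: "(C1 + C2 * P) / a < s ^ k"
    using real_arch_pow[OF s(1)] by auto
  have sk: "1 \<le> s ^ k" using s by simp
  have "C1 + C2 * real k ^ d \<le> s ^ k * (C1 + C2 * P)"
    using mult_left_mono[OF kd[of k] C(2)] mult_right_mono[OF sk C(1)] by (simp add: algebra_simps)
  also have "\<dots> < s ^ k * (s ^ k * a)"
    using k a sk by (intro mult_strict_left_mono) (auto simp: field_simps)
  also have "\<dots> = r ^ k * a" using s by (simp add: power_mult_distrib[symmetric])
  finally show ?thesis ..
qed

lemma superinvariant_power:
  assumes B: "B \<in> carrier_mat n n" "nonneg_mat B"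
    and x: "x \<in> carrier_vec n" and r: "0 \<le> r" and Bx: "\<forall>i<n. r * x $ i \<le> (B *\<^sub>v x) $ i"
    and i: "i < n"
  shows "r ^ k * x $ i \<le> (B ^\<^sub>m k *\<^sub>v x) $ i"
  using i
proof (induction k arbitrary: i)
  case 0
  then show ?case using x B by simp
next
  case (Suc k)
  have Bk: "B ^\<^sub>m k \<in> carrier_mat n n" "nonneg_mat (B ^\<^sub>m k)"
    using B by (auto intro: nonneg_mat_power)
  have "r ^ Suc k * x $ i \<le> r * (B ^\<^sub>m k *\<^sub>v x) $ i"
    using mult_left_mono[OF Suc.IH[OF Suc.prems] r] by simp
  also have "\<dots> = (B ^\<^sub>m k *\<^sub>v (r \<cdot>\<^sub>v x)) $ i"
    using mult_mat_vec[OF Bk(1) x, of r] Bk(1)[THEN carrier_matD(1)] Suc.prems by simp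
  also have "\<dots> \<le> (B ^\<^sub>m k *\<^sub>v (B *\<^sub>v x)) $ i"
    using Bx x B by (intro nonneg_mat_mult_vec_mono[OF Bk _ _ _ Suc.prems]) auto
  also have "\<dots> = (B ^\<^sub>m Suc k *\<^sub>v x) $ i"
    using assoc_mult_mat_vec[OF Bk(1) B(1) x] by simp
  finally show ?case .
qed

lemma one_less_pf_eig_if_superinvariant:
  assumes B: "B \<in> carrier_mat n n" "nonneg_mat B" and n: "0 < n"
    and x: "x \<in> carrier_vec n" "\<forall>i<n. 0 < x $ i"
    and r: "1 < r" and Bx: "\<forall>i<n. r * x $ i \<le> (B *\<^sub>v x) $ i"
  shows "1 < pf_eig B"
proof (rule ccontr)
  \<comment> \<open>Spectral radius at most 1 bounds the entries of \<open>B\<^sup>k\<close> polynomially in \<open>k\<close>,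
      whereas \<open>B\<^sup>k x \<ge> r\<^sup>k x\<close> grows exponentially.\<close>
  assume "\<not> 1 < pf_eig B"
  then have "spectral_radius (map_mat complex_of_real B) \<le> 1"
    by (simp add: pf_eig_def)
  from spectral_radius_jnf_norm_bound_le_1_upper_triangular[OF _ this] B
  obtain c1 c2 where bound:
    "\<And>k. norm_bound (map_mat complex_of_real B ^\<^sub>m k) (c1 + c2 * of_nat k ^ (n - 1))"
    by fastforce
  define X where "X = (\<Sum>j\<in>{0..<n}. x $ j)"
  have X: "0 \<le> X" using x unfolding X_def by (intro sum_nonneg) (auto intro: less_imp_le)
  have entry: "(B ^\<^sub>m k) $$ (0,j) \<le> \<bar>c1\<bar> + \<bar>c2\<bar> * real k ^ (n - 1)" if "j < n" for k j
  proof -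
    have "map_mat complex_of_real B ^\<^sub>m k = map_mat complex_of_real (B ^\<^sub>m k)"
      using of_real_hom.mat_hom_pow[OF B(1)] by metis
    then have "\<bar>(B ^\<^sub>m k) $$ (0,j)\<bar> \<le> c1 + c2 * real k ^ (n - 1)"
      using bound[of k] that n B by (auto simp: norm_bound_def)
    moreover have "c2 * real k ^ (n - 1) \<le> \<bar>c2\<bar> * real k ^ (n - 1)"
      by (intro mult_right_mono) auto
    ultimately show ?thesis by linarith
  qed
  obtain k where k: "\<bar>c1\<bar> * X + \<bar>c2\<bar> * X * real k ^ (n - 1) < r ^ k * x $ 0"
    using exp_exceeds_poly[of r "x $ 0" "\<bar>c1\<bar> * X" "\<bar>c2\<bar> * X"] r x n X by auto
  have "r ^ k * x $ 0 \<le> (B ^\<^sub>m k *\<^sub>v x) $ 0"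
    using superinvariant_power[OF B x(1) _ Bx n] r by simp
  also have "\<dots> = (\<Sum>j\<in>{0..<n}. (B ^\<^sub>m k) $$ (0,j) * x $ j)"
    using mult_mat_vec_index_sum[OF pow_carrier_mat[OF B(1)] x(1) n] .
  also have "\<dots> \<le> (\<Sum>j\<in>{0..<n}. (\<bar>c1\<bar> + \<bar>c2\<bar> * real k ^ (n - 1)) * x $ j)"
    using entry x by (intro sum_mono mult_right_mono) (auto intro: less_imp_le)
  also have "\<dots> = \<bar>c1\<bar> * X + \<bar>c2\<bar> * X * real k ^ (n - 1)"
    unfolding X_def by (simp add: sum_distrib_left algebra_simps)
  finally show False using k by simp
qed

lemma one_less_pf_eig_if_strictly_superinvariant:
  assumes B: "B \<in> carrier_mat n n" "nonneg_mat B" and n: "0 < n"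
    and x: "x \<in> carrier_vec n" "\<forall>i<n. 0 < x $ i"
    and Bx: "\<forall>i<n. x $ i < (B *\<^sub>v x) $ i"
  shows "1 < pf_eig B"
proof -
  define r where "r = Min ((\<lambda>i. (B *\<^sub>v x) $ i / x $ i) ` {0..<n})"
  have "r \<in> (\<lambda>i. (B *\<^sub>v x) $ i / x $ i) ` {0..<n}"
    unfolding r_def using n by (intro Min_in) auto
  then have "1 < r" using Bx x by auto
  moreover have "r * x $ i \<le> (B *\<^sub>v x) $ i" if "i < n" for i
  proof -
    have "r \<le> (B *\<^sub>v x) $ i / x $ i" unfolding r_def using that by (intro Min_le) auto
    then show ?thesis using x that by (simp add: le_divide_eq)
  qed
  ultimately show ?thesis
    using one_less_pf_eig_if_superinvariant[OF B n x] by blast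
qed

lemma pf_eig_le_if_subinvariant:
  assumes B: "B \<in> carrier_mat n n" "nonneg_mat B" and n: "0 < n"
    and p: "p \<in> carrier_vec n" "\<forall>i<n. 0 < p $ i"
    and Bp: "\<forall>i<n. (B *\<^sub>v p) $ i \<le> r * p $ i"
  shows "pf_eig B \<le> r"
proof -
  have CB: "map_mat complex_of_real B \<in> carrier_mat n n" using B by simp
  obtain e v where sr: "pf_eig B = norm e"
    and v: "v \<in> carrier_vec n" "v \<noteq> 0\<^sub>v n" and Bv: "map_mat complex_of_real B *\<^sub>v v = e \<cdot>\<^sub>v v"
    using spectral_radius_mem_max(1)[OF CB n] CB
    unfolding pf_eig_def spectrum_def eigenvalue_def eigenvector_def by auto
  \<comment> \<open>Compare \<open>\<bar>v\<bar>\<close> with the smallest multiple \<open>c \<cdot> p\<close> dominating it; the bound is tight at \<open>i0\<close>.\<close>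
  define c where "c = Max ((\<lambda>i. norm (v $ i) / p $ i) ` {0..<n})"
  have v_le: "norm (v $ j) \<le> c * p $ j" if "j < n" for j
  proof -
    have "norm (v $ j) / p $ j \<le> c" unfolding c_def using that by (intro Max_ge) auto
    then show ?thesis using p that by (simp add: divide_le_eq)
  qed
  have "c \<in> (\<lambda>i. norm (v $ i) / p $ i) ` {0..<n}" unfolding c_def using n by (intro Max_in) auto
  then obtain i0 where i0: "i0 < n" and v_i0: "norm (v $ i0) = c * p $ i0"
    using p by fastforce
  obtain j0 where j0: "j0 < n" "v $ j0 \<noteq> 0"
    using v by (metis eq_vecI index_zero_vec carrier_vecD)
  then have "0 < c * p $ j0" using v_le[OF j0(1)] by (meson less_le_trans zero_less_norm_iff)
  then have c: "0 < c" using p(2) j0(1) zero_less_mult_pos2 by blast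
  have "norm e * norm (v $ i0) = norm ((map_mat complex_of_real B *\<^sub>v v) $ i0)"
    using Bv i0 v by (simp add: norm_mult)
  also have "\<dots> = norm (\<Sum>j\<in>{0..<n}. complex_of_real (B $$ (i0,j)) * v $ j)"
    using mult_mat_vec_index_sum[OF CB v(1) i0] B i0 by (auto intro!: arg_cong[where f = norm] sum.cong)
  also have "\<dots> \<le> (\<Sum>j\<in>{0..<n}. B $$ (i0,j) * norm (v $ j))"
    using B i0 by (intro norm_sum[THEN order_trans] eq_refl sum.cong) (auto simp: norm_mult nonneg_mat_def)
  also have "\<dots> \<le> (\<Sum>j\<in>{0..<n}. B $$ (i0,j) * (c * p $ j))"
    using B i0 v_le by (intro sum_mono mult_left_mono) (auto simp: nonneg_mat_def)
  also have "\<dots> = c * (B *\<^sub>v p) $ i0"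
    using mult_mat_vec_index_sum[OF B(1) p(1) i0] by (simp add: sum_distrib_left algebra_simps)
  also have "\<dots> \<le> r * norm (v $ i0)"
    using mult_left_mono[OF Bp[rule_format, OF i0], of c] c v_i0 by (simp add: algebra_simps)
  finally have "norm e \<le> r"
    using v_i0 c p i0 by (simp add: mult_le_cancel_right_pos)
  then show ?thesis using sr by simp
qed

lemma irreducible_superinvariant_positive:
  assumes B: "B \<in> carrier_mat n n" "nonneg_mat B" "irreducible_mat B"
    and w: "w \<in> carrier_vec n" "\<forall>i<n. 0 \<le> w $ i" "j0 < n" "0 < w $ j0"
    and Bw: "\<forall>i<n. w $ i \<le> (B *\<^sub>v w) $ i"
  obtains u where "u \<in> carrier_vec n" "\<forall>i<n. 0 < u $ i" "\<forall>i<n. u $ i \<le> (B *\<^sub>v u) $ i"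
proof -
  \<comment> \<open>The iterates \<open>B\<^sup>k w\<close> increase, and positivity of an entry spreads backwards along the
      edges of the graph of \<open>B\<close>, which is strongly connected.\<close>
  define it where "it k = ((\<lambda>y. B *\<^sub>v y) ^^ k) w" for k
  have it_Suc: "it (Suc k) = B *\<^sub>v it k" for k unfolding it_def by simp
  have it: "it k \<in> carrier_vec n \<and> (\<forall>i<n. 0 \<le> it k $ i)" for k
  proof (induction k)
    case (Suc k)
    then show ?case using nonneg_mat_mult_vec_nonneg[OF B(1,2)] B(1) by (simp add: it_Suc)
  qed (use w in \<open>simp add: it_def\<close>)
  have it_inc: "\<forall>i<n. it k $ i \<le> it (Suc k) $ i" for k
  proof (induction k)
    case (Suc k)
    show ?case
    proof (intro allI impI)
      fix i assume i: "i < n"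
      have "it (Suc k) $ i = (B *\<^sub>v it k) $ i" by (simp add: it_Suc)
      also have "\<dots> \<le> (B *\<^sub>v it (Suc k)) $ i"
        using nonneg_mat_mult_vec_mono[OF B(1,2)] it Suc.IH i by blast
      also have "\<dots> = it (Suc (Suc k)) $ i" by (simp add: it_Suc)
      finally show "it (Suc k) $ i \<le> it (Suc (Suc k)) $ i" .
    qed
  qed (use Bw in \<open>simp add: it_def\<close>)
  have it_mono: "it k $ i \<le> it l $ i" if "k \<le> l" "i < n" for k l i
    using lift_Suc_mono_le[of "\<lambda>k. it k $ i", OF _ that(1)] it_inc that(2) by blast
  define E where "E = {(a,b). a < n \<and> b < n \<and> B $$ (a,b) \<noteq> 0}"
  have edge: "\<exists>k. 0 < it k $ a" if "(a,c) \<in> E" "0 < it k $ c" for a c k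
  proof -
    have a: "a < n" and c: "c < n" and "0 < B $$ (a,c)"
      using that(1) B(1,2) unfolding E_def nonneg_mat_def by (auto simp: order_less_le)
    then have "0 < B $$ (a,c) * it k $ c" using that(2) by simp
    also have "\<dots> \<le> (\<Sum>j\<in>{0..<n}. B $$ (a,j) * it k $ j)"
      using B(1,2) it[of k] a c by (intro member_le_sum) (auto simp: nonneg_mat_def)
    also have "\<dots> = it (Suc k) $ a"
      using mult_mat_vec_index_sum[OF B(1) _ a] it by (simp add: it_Suc)
    finally show ?thesis ..
  qed
  have reach: "\<exists>k. 0 < it k $ i" if "i < n" for i
  proof (cases "i = j0")
    case False
    from B(1,3) have "(i,j0) \<in> E\<^sup>+"
      using that w(3) False unfolding irreducible_mat_def E_def by auto
    then show ?thesis
    proof (induction rule: converse_trancl_induct)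
      case (base a)
      then show ?case using edge[of a j0 0] w(4) by (simp add: it_def)
    next
      case (step a c)
      then show ?case using edge by blast
    qed
  qed (use w in \<open>auto simp: it_def intro: exI[of _ 0]\<close>)
  then obtain kf where kf: "\<And>i. i < n \<Longrightarrow> 0 < it (kf i) $ i" by metis
  define L where "L = Max (kf ` {0..<n})"
  have "kf i \<le> L" if "i < n" for i unfolding L_def using that by (intro Max_ge) auto
  then have "\<forall>i<n. 0 < it L $ i" using kf it_mono by (meson less_le_trans)
  moreover have "\<forall>i<n. it L $ i \<le> (B *\<^sub>v it L) $ i" using it_inc[of L] by (simp add: it_Suc)
  ultimately show thesis using that it by blast
qed

section \<open>Monotone matrices\<close>

definition monotone_mat :: "real mat \<Rightarrow> bool" where
  "monotone_mat A \<longleftrightarrow> (\<forall>x \<in> carrier_vec (dim_col A).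
     (\<forall>i<dim_row A. 0 \<le> (A *\<^sub>v x) $ i) \<longrightarrow> (\<forall>j<dim_col A. 0 \<le> x $ j))"

lemma monotone_mat_le:
  assumes A: "A \<in> carrier_mat n n" "monotone_mat A"
    and xy: "x \<in> carrier_vec n" "y \<in> carrier_vec n" "\<forall>i<n. (A *\<^sub>v x) $ i \<le> (A *\<^sub>v y) $ i"
    and j: "j < n"
  shows "x $ j \<le> y $ j"
proof -
  have "A *\<^sub>v (y - x) = A *\<^sub>v y - A *\<^sub>v x"
    using mult_minus_distrib_mat_vec[OF A(1) xy(2,1)] .
  then have "\<forall>i<n. 0 \<le> (A *\<^sub>v (y - x)) $ i" using xy A(1) by simp
  moreover have "y - x \<in> carrier_vec n" using xy by simp
  ultimately have "0 \<le> (y - x) $ j"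
    using A j unfolding monotone_mat_def carrier_matD[OF A(1)] by blast
  then show ?thesis using xy j by simp
qed

lemma monotone_mat_solvable:
  assumes A: "A \<in> carrier_mat n n" "monotone_mat A" and b: "b \<in> carrier_vec n"
  obtains x where "x \<in> carrier_vec n" "A *\<^sub>v x = b"
proof -
  have "det A \<noteq> 0"
  proof
    assume "det A = 0"
    then obtain v where v: "v \<in> carrier_vec n" "v \<noteq> 0\<^sub>v n" "A *\<^sub>v v = 0\<^sub>v n"
      using det_0_iff_vec_prod_zero[OF A(1)] by auto
    have "A *\<^sub>v 0\<^sub>v n = 0\<^sub>v n" using A(1) by (auto simp: scalar_prod_def intro!: eq_vecI)
    then have Av: "A *\<^sub>v v = A *\<^sub>v 0\<^sub>v n" using v(3) by simp
    have "v $ j = 0" if "j < n" for j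
      using monotone_mat_le[OF A v(1) zero_carrier_vec _ that]
        monotone_mat_le[OF A zero_carrier_vec v(1) _ that] that unfolding Av by simp
    then show False using v(1,2) by (auto intro: eq_vecI)
  qed
  then obtain A' where A': "A' \<in> carrier_mat n n" "A * A' = 1\<^sub>m n"
    using det_non_zero_imp_unit[OF A(1), of "()"] unfolding Units_def ring_mat_def by auto
  show thesis
    by (rule that[of "A' *\<^sub>v b"]) (use A' A(1) b in \<open>simp_all flip: assoc_mult_mat_vec\<close>)
qed

lemma monotone_matI:
  assumes A: "A \<in> carrier_mat n n" and F: "nonneg_mat (1\<^sub>m n - A)"
    and no_superinvariant: "\<And>w. w \<in> carrier_vec n \<Longrightarrow> \<forall>i<n. 0 \<le> w $ i \<Longrightarrow>
      \<forall>i<n. w $ i \<le> ((1\<^sub>m n - A) *\<^sub>v w) $ i \<Longrightarrow> \<forall>i<n. w $ i = 0"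
  shows "monotone_mat A"
  unfolding monotone_mat_def
proof (intro ballI impI allI)
  fix x j assume x: "x \<in> carrier_vec (dim_col A)" and Ax: "\<forall>i<dim_row A. 0 \<le> (A *\<^sub>v x) $ i"
    and j: "j < dim_col A"
  have Fc: "1\<^sub>m n - A \<in> carrier_mat n n" using minus_carrier_mat[OF A] .
  \<comment> \<open>The negative part of \<open>x\<close> is superinvariant, hence zero.\<close>
  define w where "w = vec n (\<lambda>i. max (- x $ i) 0)"
  have wc: "w \<in> carrier_vec n" by (simp add: w_def)
  have "w $ i \<le> ((1\<^sub>m n - A) *\<^sub>v w) $ i" if i: "i < n" for i
  proof (cases "0 \<le> x $ i")
    case True
    then show ?thesis
      using nonneg_mat_mult_vec_nonneg[OF Fc F wc _ i] i by (simp add: w_def)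
  next
    case False
    have xc: "- x \<in> carrier_vec n" using x A by simp
    have "w $ i = ((1\<^sub>m n - A) *\<^sub>v (- x)) $ i + - (A *\<^sub>v x) $ i"
      using one_minus_mat_mult_vec_index[OF A xc i] x A i False by (simp add: w_def)
    moreover have "((1\<^sub>m n - A) *\<^sub>v (- x)) $ i \<le> ((1\<^sub>m n - A) *\<^sub>v w) $ i"
      using x A by (intro nonneg_mat_mult_vec_mono[OF Fc F xc wc _ i]) (auto simp: w_def)
    moreover have "0 \<le> (A *\<^sub>v x) $ i" using Ax i A by simp
    ultimately show ?thesis by linarith
  qed
  then have "max (- x $ j) 0 = 0" using no_superinvariant[OF wc] j A by (simp add: w_def)
  then show "0 \<le> x $ j" by (simp add: max_def split: if_splits)
qed

section \<open>Columnwise perturbations \<open>\<psi>\<close>\<close>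

lemma psi_carrier: "X \<in> carrier_mat n n \<Longrightarrow> psi X y \<Omega> \<in> carrier_mat n n"
  by (simp add: psi_def)

lemma psi_nonneg:
  assumes "X \<in> carrier_mat n n" "nonneg_mat X" "\<forall>i<n. 0 \<le> y $ i"
  shows "nonneg_mat (psi X y \<Omega>)"
  using assms by (simp add: psi_def nonneg_mat_def)

lemma psi_mult_vec_index:
  assumes X: "X \<in> carrier_mat n n" and p: "p \<in> carrier_vec n"
    and \<Omega>: "\<Omega> \<subseteq> {0..<n}" and i: "i < n"
  shows "(psi X y \<Omega> *\<^sub>v p) $ i = (X *\<^sub>v p) $ i + y $ i * (\<Sum>j\<in>\<Omega>. p $ j)"
proof -
  have "(psi X y \<Omega> *\<^sub>v p) $ i
      = (\<Sum>j\<in>{0..<n}. X $$ (i,j) * p $ j + (if j \<in> \<Omega> then y $ i * p $ j else 0))"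
    using mult_mat_vec_index_sum[OF psi_carrier[OF X] p i] X i
    by (auto simp: psi_def distrib_right intro: sum.cong)
  also have "\<dots> = (X *\<^sub>v p) $ i + (\<Sum>j\<in>\<Omega>. y $ i * p $ j)"
    using mult_mat_vec_index_sum[OF X p i] \<Omega>
    by (simp add: sum.distrib sum.If_cases Int_absorb1)
  finally show ?thesis by (simp add: sum_distrib_left)
qed

lemma one_less_pf_eig_psi:
  assumes F: "F \<in> carrier_mat n n" "nonneg_mat F" and n: "0 < n"
    and y: "\<forall>i<n. 0 \<le> y $ i" and \<Omega>: "\<Omega> \<subseteq> {0..<n}"
    and p: "p \<in> carrier_vec n" "\<forall>i<n. 0 < p $ i"
    and grow: "\<forall>i<n. p $ i < (F *\<^sub>v p) $ i + y $ i * (\<Sum>j\<in>\<Omega>. p $ j)"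
  shows "1 < pf_eig (psi F y \<Omega>)"
  using one_less_pf_eig_if_strictly_superinvariant[OF psi_carrier[OF F(1)] psi_nonneg[OF F y] n p]
    grow psi_mult_vec_index[OF F(1) p(1) \<Omega>] by simp

lemma pf_eig_psi_le_1:
  assumes F: "F \<in> carrier_mat n n" "nonneg_mat F" and n: "0 < n"
    and y: "\<forall>i<n. 0 \<le> y $ i" and \<Omega>: "\<Omega> \<subseteq> {0..<n}"
    and p: "p \<in> carrier_vec n" "\<forall>i<n. 0 < p $ i"
    and shrink: "\<forall>i<n. (F *\<^sub>v p) $ i + y $ i * (\<Sum>j\<in>\<Omega>. p $ j) \<le> p $ i"
  shows "pf_eig (psi F y \<Omega>) \<le> 1"
  using pf_eig_le_if_subinvariant[OF psi_carrier[OF F(1)] psi_nonneg[OF F y] n p, where r = 1]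
    shrink psi_mult_vec_index[OF F(1) p(1) \<Omega>] by simp

lemma monotone_mat_if_pf_eig_psi_le_1:
  assumes A: "A \<in> carrier_mat n n" and n: "0 < n"
    and F: "nonneg_mat (1\<^sub>m n - A)" "irreducible_mat (1\<^sub>m n - A)"
    and y: "\<forall>i<n. 0 < y $ i" and \<Omega>: "\<Omega> \<subseteq> {0..<n}" "\<Omega> \<noteq> {}"
    and pf: "pf_eig (psi (1\<^sub>m n - A) y \<Omega>) \<le> 1"
  shows "monotone_mat A"
proof (rule monotone_matI[OF A F(1)])
  have Fc: "1\<^sub>m n - A \<in> carrier_mat n n" using minus_carrier_mat[OF A] .
  fix w assume w: "w \<in> carrier_vec n" "\<forall>i<n. 0 \<le> w $ i"
    and Fw: "\<forall>i<n. w $ i \<le> ((1\<^sub>m n - A) *\<^sub>v w) $ i"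
  show "\<forall>i<n. w $ i = 0"
  proof (rule ccontr)
    assume "\<not> (\<forall>i<n. w $ i = 0)"
    then obtain j0 where "j0 < n" "0 < w $ j0" using w(2) by force
    then obtain u where u: "u \<in> carrier_vec n" "\<forall>i<n. 0 < u $ i"
      and Fu: "\<forall>i<n. u $ i \<le> ((1\<^sub>m n - A) *\<^sub>v u) $ i"
      using irreducible_superinvariant_positive[OF Fc F(1,2) w] Fw by blast
    have S: "0 < (\<Sum>j\<in>\<Omega>. u $ j)"
      using \<Omega> u(2) finite_subset[OF \<Omega>(1)] by (intro sum_pos) auto
    have "u $ i < ((1\<^sub>m n - A) *\<^sub>v u) $ i + y $ i * (\<Sum>j\<in>\<Omega>. u $ j)" if "i < n" for i
      using Fu[rule_format, OF that] mult_pos_pos[OF y[rule_format, OF that] S] by linarith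
    then have "1 < pf_eig (psi (1\<^sub>m n - A) y \<Omega>)"
      using y by (intro one_less_pf_eig_psi[OF Fc F(1) n _ \<Omega>(1) u]) (auto intro: less_imp_le)
    with pf show False by simp
  qed
qed

section \<open>Multicast power control\<close>

lemma Gmat_carrier: "Gmat N g \<mu> ks \<in> carrier_mat N N"
  by (simp add: Gmat_def)

lemma arow_scalar_prod:
  assumes "p \<in> carrier_vec N" "i < N"
  shows "arow N g \<mu> i (ks i) \<bullet> p = (Gmat N g \<mu> ks *\<^sub>v p) $ i"
  using assms by (simp add: Gmat_def arow_def scalar_prod_def)

lemma Gmat_cong: "\<forall>i<N. ks i = ks' i \<Longrightarrow> Gmat N g \<mu> ks = Gmat N g \<mu> ks'"
  by (auto simp: Gmat_def intro!: eq_matI)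

lemma nG_cong: "\<forall>i<N. ks i = ks' i \<Longrightarrow> nG N \<sigma>2 g \<mu> ks = nG N \<sigma>2 g \<mu> ks'"
  by (auto simp: nG_def intro!: eq_vecI)

lemma finite_image_selections:
  assumes f: "\<And>ks ks'. \<forall>i<N. ks i = ks' i \<Longrightarrow> f ks = f ks'"
  shows "finite (f ` selections N K)"
proof (rule finite_subset)
  show "f ` selections N K \<subseteq> f ` (\<Pi>\<^sub>E i\<in>{..<N}. {1..K i})"
  proof
    fix x assume "x \<in> f ` selections N K"
    then obtain ks where "ks \<in> selections N K" "x = f ks" by blast
    then show "x \<in> f ` (\<Pi>\<^sub>E i\<in>{..<N}. {1..K i})"
      using f[of ks "restrict ks {..<N}"] by (auto simp: selections_def)
  qed
qed (auto intro: finite_PiE)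

lemma ex_max_on_selections:
  fixes f :: "(nat \<Rightarrow> nat) \<Rightarrow> real"
  assumes K: "\<forall>i<N. 1 \<le> K i" and f: "\<And>ks ks'. \<forall>i<N. ks i = ks' i \<Longrightarrow> f ks = f ks'"
  shows "\<exists>ks0\<in>selections N K. \<forall>ks\<in>selections N K. f ks \<le> f ks0"
proof -
  have fin: "finite (f ` selections N K)" using f by (rule finite_image_selections)
  have "(\<lambda>_. 1) \<in> selections N K" using K by (simp add: selections_def)
  then have "Max (f ` selections N K) \<in> f ` selections N K"
    using fin by (intro Max_in) auto
  then obtain ks0 where "ks0 \<in> selections N K" "f ks0 = Max (f ` selections N K)" by auto
  moreover have "f ks \<le> Max (f ` selections N K)" if "ks \<in> selections N K" for ks
    using fin that by (intro Max_ge) auto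
  ultimately show ?thesis by metis
qed

lemma total_power_increases_on_switch:
  assumes i: "i < N" and mono: "monotone_mat (Gmat N g \<mu> (ks(i := k)))"
    and p: "p \<in> carrier_vec N" "Gmat N g \<mu> ks *\<^sub>v p = nG N \<sigma>2 g \<mu> ks"
    and q: "q \<in> carrier_vec N" "Gmat N g \<mu> (ks(i := k)) *\<^sub>v q = nG N \<sigma>2 g \<mu> (ks(i := k))"
    and violated: "arow N g \<mu> i k \<bullet> p < nval \<sigma>2 g \<mu> i k"
  shows "(\<Sum>j<N. p $ j) < (\<Sum>j<N. q $ j)"
proof -
  let ?G = "Gmat N g \<mu> (ks(i := k))"
  have "(?G *\<^sub>v p) $ j \<le> (?G *\<^sub>v q) $ j" if j: "j < N" for j
  proof (cases "j = i")
    case True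
    then show ?thesis
      using violated arow_scalar_prod[OF p(1) i, of g \<mu> "ks(i := k)"] q(2) i by (simp add: nG_def)
  next
    case False
    then have "(?G *\<^sub>v p) $ j = (Gmat N g \<mu> ks *\<^sub>v p) $ j"
      using arow_scalar_prod[OF p(1) j, of g \<mu> "ks(i := k)"] arow_scalar_prod[OF p(1) j, of g \<mu> ks]
      by simp
    then show ?thesis using p(2) q(2) j False by (simp add: nG_def)
  qed
  then have pq: "\<forall>j<N. p $ j \<le> q $ j"
    using monotone_mat_le[OF Gmat_carrier mono p(1) q(1)] by blast
  have "p \<noteq> q"
  proof
    assume "p = q"
    then have "arow N g \<mu> i k \<bullet> p = nval \<sigma>2 g \<mu> i k"
      using arow_scalar_prod[OF p(1) i, of g \<mu> "ks(i := k)"] q(2) i by (simp add: nG_def)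
    with violated show False by simp
  qed
  then obtain j where "j < N" "p $ j \<noteq> q $ j" using p(1) q(1) by (metis eq_vecI carrier_vecD)
  then have "\<exists>j\<in>{..<N}. p $ j < q $ j" using pq by force
  then show ?thesis using pq by (intro sum_strict_mono_ex1) auto
qed

locale multicast_power_control =
  fixes N M :: nat and K :: "nat \<Rightarrow> nat" and g :: "nat \<Rightarrow> nat \<Rightarrow> nat \<Rightarrow> real"
    and \<sigma>2 :: real and \<mu> :: "nat \<Rightarrow> real"
    and \<Omega> :: "nat \<Rightarrow> nat set" and pbar :: "nat \<Rightarrow> real"
  assumes N_pos: "0 < N" and M_pos: "1 \<le> M"
    and K_pos: "\<forall>i<N. 1 \<le> K i"
    and g_nonneg: "\<forall>i<N. \<forall>k\<in>{1..K i}. \<forall>j<N. 0 \<le> g i k j"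
    and g_direct: "\<forall>i<N. \<forall>k\<in>{1..K i}. 0 < g i k i"
    and sigma_pos: "0 < \<sigma>2"
    and mu_pos: "\<forall>i<N. 0 < \<mu> i"
    and irred: "\<forall>G\<in>Gset N K g \<mu>. irreducible_mat (1\<^sub>m N - G)"
    and Omega: "\<forall>m<M. \<Omega> m \<subseteq> {0..<N} \<and> \<Omega> m \<noteq> {}"
    and pbar_pos: "\<forall>m<M. 0 < pbar m"
begin

abbreviation Psi :: "(nat \<Rightarrow> nat) \<Rightarrow> nat \<Rightarrow> real mat" where
  "Psi ks m \<equiv> psi (1\<^sub>m N - Gmat N g \<mu> ks) ((1 / pbar m) \<cdot>\<^sub>v nG N \<sigma>2 g \<mu> ks) (\<Omega> m)"

lemma interference_carrier: "1\<^sub>m N - Gmat N g \<mu> ks \<in> carrier_mat N N"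
  using minus_carrier_mat[OF Gmat_carrier] .

lemma interference_nonneg:
  assumes "ks \<in> selections N K"
  shows "nonneg_mat (1\<^sub>m N - Gmat N g \<mu> ks)"
  using assms g_nonneg g_direct mu_pos
  by (auto simp: nonneg_mat_def Gmat_def arow_def selections_def)

lemma noise_pos:
  assumes "ks \<in> selections N K" "i < N"
  shows "0 < nG N \<sigma>2 g \<mu> ks $ i"
  using assms g_direct mu_pos sigma_pos by (auto simp: nG_def nval_def selections_def)

lemma scaled_noise_pos:
  assumes "ks \<in> selections N K" "m < M"
  shows "\<forall>i<N. 0 < ((1 / pbar m) \<cdot>\<^sub>v nG N \<sigma>2 g \<mu> ks) $ i"
  using noise_pos[OF assms(1)] pbar_pos assms(2) by (simp add: nG_def)

lemma pf_eig_Psi_le_1_if_feasible: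
  assumes p: "p \<in> carrier_vec N" "\<forall>i<N. 0 \<le> p $ i"
    and budget: "\<forall>m<M. (\<Sum>i\<in>\<Omega> m. p $ i) \<le> pbar m"
    and sinr: "\<forall>i<N. \<forall>k\<in>{1..K i}. arow N g \<mu> i k \<bullet> p \<ge> nval \<sigma>2 g \<mu> i k"
    and ks: "ks \<in> selections N K" and m: "m < M"
  shows "pf_eig (Psi ks m) \<le> 1"
proof -
  let ?F = "1\<^sub>m N - Gmat N g \<mu> ks" and ?n = "nG N \<sigma>2 g \<mu> ks"
  have Fnn: "nonneg_mat ?F" using interference_nonneg[OF ks] .
  have row: "?n $ i + (?F *\<^sub>v p) $ i \<le> p $ i" if "i < N" for i
  proof -
    have "nval \<sigma>2 g \<mu> i (ks i) \<le> arow N g \<mu> i (ks i) \<bullet> p"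
      using sinr ks that by (auto simp: selections_def)
    then show ?thesis
      using arow_scalar_prod[OF p(1) that, of g \<mu> ks]
        one_minus_mat_mult_vec_index[OF Gmat_carrier[of N g \<mu> ks] p(1) that] that
      by (simp add: nG_def)
  qed
  have ppos: "\<forall>i<N. 0 < p $ i"
  proof (intro allI impI)
    fix i assume i: "i < N"
    show "0 < p $ i"
      using row[OF i] noise_pos[OF ks i] nonneg_mat_mult_vec_nonneg[OF interference_carrier Fnn p i]
      by linarith
  qed
  have "(?F *\<^sub>v p) $ i + ((1 / pbar m) \<cdot>\<^sub>v ?n) $ i * (\<Sum>j\<in>\<Omega> m. p $ j) \<le> p $ i"
    if i: "i < N" for i
  proof -
    have "?n $ i / pbar m * (\<Sum>j\<in>\<Omega> m. p $ j) \<le> ?n $ i / pbar m * pbar m"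
      using budget m pbar_pos noise_pos[OF ks i] by (intro mult_left_mono) auto
    also have "\<dots> = ?n $ i" using pbar_pos m by force
    finally have "?n $ i / pbar m * (\<Sum>j\<in>\<Omega> m. p $ j) \<le> ?n $ i" .
    then show ?thesis using row[OF i] i by (simp add: nG_def)
  qed
  moreover have "\<forall>i<N. 0 \<le> ((1 / pbar m) \<cdot>\<^sub>v ?n) $ i"
    using scaled_noise_pos[OF ks m] by (auto intro: less_imp_le)
  ultimately show ?thesis
    using pf_eig_psi_le_1[OF interference_carrier Fnn N_pos _ _ p(1) ppos] Omega m by blast
qed

lemma Gmat_monotone_if_pf_eig_Psi_le_1:
  assumes ks: "ks \<in> selections N K" and m: "m < M" and pf: "pf_eig (Psi ks m) \<le> 1"
  shows "monotone_mat (Gmat N g \<mu> ks)"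
proof (rule monotone_mat_if_pf_eig_psi_le_1[OF Gmat_carrier N_pos interference_nonneg[OF ks] _
      scaled_noise_pos[OF ks m] _ _ pf])
  show "irreducible_mat (1\<^sub>m N - Gmat N g \<mu> ks)" using irred ks by (simp add: Gset_def)
qed (use Omega m in auto)

lemma tight_power_pos:
  assumes ks: "ks \<in> selections N K" and mono: "monotone_mat (Gmat N g \<mu> ks)"
    and p: "p \<in> carrier_vec N" and tight: "Gmat N g \<mu> ks *\<^sub>v p = nG N \<sigma>2 g \<mu> ks"
  shows "\<forall>i<N. 0 < p $ i"
proof -
  have "(Gmat N g \<mu> ks *\<^sub>v 0\<^sub>v N) $ i \<le> (Gmat N g \<mu> ks *\<^sub>v p) $ i" if "i < N" for i
    using tight noise_pos[OF ks that] that Gmat_carrier[of N g \<mu> ks] by (simp add: scalar_prod_def)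
  then have pnn: "\<forall>i<N. 0 \<le> p $ i"
    using monotone_mat_le[OF Gmat_carrier mono zero_carrier_vec p] by simp
  show ?thesis
  proof (intro allI impI)
    fix i assume i: "i < N"
    show "0 < p $ i"
      using one_minus_mat_mult_vec_index[OF Gmat_carrier p i] tight noise_pos[OF ks i]
        nonneg_mat_mult_vec_nonneg[OF interference_carrier interference_nonneg[OF ks] p pnn i]
      by simp
  qed
qed

lemma ex_feasible_power_tight_at_selection:
  assumes mono: "\<forall>ks\<in>selections N K. monotone_mat (Gmat N g \<mu> ks)"
  obtains p ks0 where "p \<in> carrier_vec N" "ks0 \<in> selections N K"
    "Gmat N g \<mu> ks0 *\<^sub>v p = nG N \<sigma>2 g \<mu> ks0"
    "\<forall>i<N. \<forall>k\<in>{1..K i}. nval \<sigma>2 g \<mu> i k \<le> arow N g \<mu> i k \<bullet> p"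
proof -
  define sol where
    "sol ks = (SOME p. p \<in> carrier_vec N \<and> Gmat N g \<mu> ks *\<^sub>v p = nG N \<sigma>2 g \<mu> ks)" for ks
  have sol: "sol ks \<in> carrier_vec N \<and> Gmat N g \<mu> ks *\<^sub>v sol ks = nG N \<sigma>2 g \<mu> ks"
    if ks: "ks \<in> selections N K" for ks
  proof -
    have "nG N \<sigma>2 g \<mu> ks \<in> carrier_vec N" by (simp add: nG_def)
    then obtain p where "p \<in> carrier_vec N" "Gmat N g \<mu> ks *\<^sub>v p = nG N \<sigma>2 g \<mu> ks"
      by (rule monotone_mat_solvable[OF Gmat_carrier mono[rule_format, OF ks]])
    then have "\<exists>p. p \<in> carrier_vec N \<and> Gmat N g \<mu> ks *\<^sub>v p = nG N \<sigma>2 g \<mu> ks" by blast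
    then show ?thesis unfolding sol_def by (rule someI_ex)
  qed
  have total_cong: "(\<Sum>j<N. sol ks $ j) = (\<Sum>j<N. sol ks' $ j)" if "\<forall>i<N. ks i = ks' i" for ks ks'
    unfolding sol_def using Gmat_cong[OF that] nG_cong[OF that] by simp
  \<comment> \<open>Maximise the total tight power; switching one transmitter to a violated receiver would
      increase it.\<close>
  obtain ks0 where ks0: "ks0 \<in> selections N K"
    and max: "\<And>ks. ks \<in> selections N K \<Longrightarrow> (\<Sum>j<N. sol ks $ j) \<le> (\<Sum>j<N. sol ks0 $ j)"
    using ex_max_on_selections[where f = "\<lambda>ks. \<Sum>j<N. sol ks $ j", OF K_pos total_cong] by blast
  define p where "p = sol ks0"
  have p: "p \<in> carrier_vec N" "Gmat N g \<mu> ks0 *\<^sub>v p = nG N \<sigma>2 g \<mu> ks0"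
    using sol[OF ks0] by (auto simp: p_def)
  have "nval \<sigma>2 g \<mu> i k \<le> arow N g \<mu> i k \<bullet> p" if i: "i < N" and k: "k \<in> {1..K i}" for i k
  proof (rule ccontr)
    assume "\<not> nval \<sigma>2 g \<mu> i k \<le> arow N g \<mu> i k \<bullet> p"
    moreover have ks1: "ks0(i := k) \<in> selections N K" using ks0 i k by (auto simp: selections_def)
    ultimately have "(\<Sum>j<N. p $ j) < (\<Sum>j<N. sol (ks0(i := k)) $ j)"
      using total_power_increases_on_switch[OF i mono[rule_format, OF ks1] p] sol[OF ks1] by simp
    with max[OF ks1] show False by (simp add: p_def)
  qed
  then show thesis using that[OF p(1) ks0 p(2)] by blast
qed

lemma feasible_if_pf_eig_Psi_le_1:
  assumes pf: "\<forall>ks\<in>selections N K. \<forall>m<M. pf_eig (Psi ks m) \<le> 1"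
  shows "\<exists>p \<in> carrier_vec N. (\<forall>i<N. 0 \<le> p $ i) \<and> (\<forall>m<M. (\<Sum>i\<in>\<Omega> m. p $ i) \<le> pbar m) \<and>
    (\<forall>i<N. \<forall>k\<in>{1..K i}. arow N g \<mu> i k \<bullet> p \<ge> nval \<sigma>2 g \<mu> i k)"
proof -
  have "0 < M" using M_pos by simp
  then have mono: "\<forall>ks\<in>selections N K. monotone_mat (Gmat N g \<mu> ks)"
    using Gmat_monotone_if_pf_eig_Psi_le_1 pf by blast
  obtain p ks0 where p: "p \<in> carrier_vec N" and ks0: "ks0 \<in> selections N K"
    and tight: "Gmat N g \<mu> ks0 *\<^sub>v p = nG N \<sigma>2 g \<mu> ks0"
    and sinr: "\<forall>i<N. \<forall>k\<in>{1..K i}. nval \<sigma>2 g \<mu> i k \<le> arow N g \<mu> i k \<bullet> p"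
    by (rule ex_feasible_power_tight_at_selection[OF mono])
  let ?F = "1\<^sub>m N - Gmat N g \<mu> ks0" and ?n = "nG N \<sigma>2 g \<mu> ks0"
  have ppos: "\<forall>i<N. 0 < p $ i" using tight_power_pos[OF ks0 mono[rule_format, OF ks0] p tight] .
  have fixed: "p $ i = (?F *\<^sub>v p) $ i + ?n $ i" if "i < N" for i
    using one_minus_mat_mult_vec_index[OF Gmat_carrier p that] tight that by simp
  have "(\<Sum>i\<in>\<Omega> m. p $ i) \<le> pbar m" if m: "m < M" for m
  proof (rule ccontr)
    assume "\<not> (\<Sum>i\<in>\<Omega> m. p $ i) \<le> pbar m"
    then have "?n $ i < ?n $ i / pbar m * (\<Sum>j\<in>\<Omega> m. p $ j)" if "i < N" for i
      using noise_pos[OF ks0 that] pbar_pos m by (simp add: field_simps)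
    then have grow: "\<forall>i<N. p $ i < (?F *\<^sub>v p) $ i + ((1 / pbar m) \<cdot>\<^sub>v ?n) $ i * (\<Sum>j\<in>\<Omega> m. p $ j)"
      using fixed by (simp add: nG_def)
    have "\<forall>i<N. 0 \<le> ((1 / pbar m) \<cdot>\<^sub>v ?n) $ i"
      using scaled_noise_pos[OF ks0 m] by (auto intro: less_imp_le)
    moreover have "\<Omega> m \<subseteq> {0..<N}" using Omega m by blast
    ultimately have "1 < pf_eig (Psi ks0 m)"
      using one_less_pf_eig_psi[OF interference_carrier interference_nonneg[OF ks0] N_pos _ _ p ppos grow]
      by blast
    with pf ks0 m show False by fastforce
  qed
  then show ?thesis using p ppos sinr by (blast intro: less_imp_le)
qed

lemma Max_pf_eig_Psi_le_1_iff:
  "Max {pf_eig (Psi ks m) | ks m. ks \<in> selections N K \<and> m < M} \<le> 1 \<longleftrightarrow>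
    (\<forall>ks\<in>selections N K. \<forall>m<M. pf_eig (Psi ks m) \<le> 1)"
proof -
  let ?S = "{pf_eig (Psi ks m) | ks m. ks \<in> selections N K \<and> m < M}"
  have S: "?S = (\<Union>m<M. (\<lambda>ks. pf_eig (Psi ks m)) ` selections N K)" by blast
  have fin: "finite ?S"
    unfolding S
  proof (intro finite_UN_I finite_image_selections)
    fix ks ks' :: "nat \<Rightarrow> nat" and m assume "\<forall>i<N. ks i = ks' i"
    then show "pf_eig (Psi ks m) = pf_eig (Psi ks' m)"
      using Gmat_cong[of N ks ks' g \<mu>] nG_cong[of N ks ks' \<sigma>2 g \<mu>] by simp
  qed simp
  have "(\<lambda>_. 1) \<in> selections N K" using K_pos by (simp add: selections_def)
  then have "pf_eig (Psi (\<lambda>_. 1) 0) \<in> ?S"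
    using M_pos by (intro CollectI exI[of _ "\<lambda>_. 1"] exI[of _ 0]) simp
  then have "?S \<noteq> {}" by blast
  then have "Max ?S \<le> 1 \<longleftrightarrow> (\<forall>a\<in>?S. a \<le> 1)" by (rule Max_le_iff[OF fin])
  then show ?thesis by blast
qed

end

theorem theorem6:
  fixes N M :: nat and K :: "nat \<Rightarrow> nat" and g :: "nat \<Rightarrow> nat \<Rightarrow> nat \<Rightarrow> real"
    and \<sigma>2 :: real and \<mu> :: "nat \<Rightarrow> real"
    and \<Omega> :: "nat \<Rightarrow> nat set" and pbar :: "nat \<Rightarrow> real"
  assumes N_pos: "0 < N" and M_pos: "1 \<le> M"
    and K_pos: "\<forall>i<N. 1 \<le> K i"
    and g_nonneg: "\<forall>i<N. \<forall>k\<in>{1..K i}. \<forall>j<N. 0 \<le> g i k j"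
    and g_direct: "\<forall>i<N. \<forall>k\<in>{1..K i}. 0 < g i k i"
    and sigma_pos: "0 < \<sigma>2"
    and mu_pos: "\<forall>i<N. 0 < \<mu> i"
    and irred: "\<forall>G\<in>Gset N K g \<mu>. irreducible_mat (1\<^sub>m N - G)"
    and Omega: "\<forall>m<M. \<Omega> m \<subseteq> {0..<N} \<and> \<Omega> m \<noteq> {}"
    and pbar_pos: "\<forall>m<M. 0 < pbar m"
  shows "(\<exists>p \<in> carrier_vec N.
            (\<forall>i<N. 0 \<le> p $ i) \<and>
            (\<forall>m<M. (\<Sum>i\<in>\<Omega> m. p $ i) \<le> pbar m) \<and>
            (\<forall>i<N. \<forall>k\<in>{1..K i}. arow N g \<mu> i k \<bullet> p \<ge> nval \<sigma>2 g \<mu> i k))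
     \<longleftrightarrow>
     Max {pf_eig (psi (1\<^sub>m N - Gmat N g \<mu> ks) ((1 / pbar m) \<cdot>\<^sub>v nG N \<sigma>2 g \<mu> ks) (\<Omega> m)) | ks m.
            ks \<in> selections N K \<and> m < M} \<le> 1"
proof -
  interpret multicast_power_control N M K g \<sigma>2 \<mu> \<Omega> pbar
    by unfold_locales (fact assms)+
  show ?thesis
    unfolding Max_pf_eig_Psi_le_1_iff
  proof
    assume "\<exists>p \<in> carrier_vec N. (\<forall>i<N. 0 \<le> p $ i) \<and> (\<forall>m<M. (\<Sum>i\<in>\<Omega> m. p $ i) \<le> pbar m) \<and>
      (\<forall>i<N. \<forall>k\<in>{1..K i}. arow N g \<mu> i k \<bullet> p \<ge> nval \<sigma>2 g \<mu> i k)"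
    then show "\<forall>ks\<in>selections N K. \<forall>m<M. pf_eig (Psi ks m) \<le> 1"
      using pf_eig_Psi_le_1_if_feasible by blast
  qed (rule feasible_if_pf_eig_Psi_le_1)
qed

end
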